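(* Let $G$ be a graph with a type-2A 1-planar drawing $D$, and let $G'$ be the graph obtained from $G$ by removing one edge from each pair of crossing edges of $D$. If $G$ is connected and $D$ is nice, then $G'$ is a connected, spanning, planar subgraph of $G$.
   Context: All drawings are good (no edge crosses itself, two edges cross at most once, adjacent edges do not cross). A drawing is 1-planar if every edge is crossed at most once. If edges $ab$ and $cd$ cross in a 1-planar drawing of $G$, the associated edges of this crossing are the edges of $G[\{a,b,c,d\}]$ other than $ab$ and $cd$. A 1-planar drawing is type-2A if every crossing has at least two associated edges, and every crossing with exactly two associated edges has these two edges disjoint. A 1-planar drawing is nice if for every pair of crossing edges, all of their associated edges are uncrossed. *)

theory Defs
  imports "HOL-Analysis.Analysis"
begin

definition simple_graph :: "'v set \<Rightarrow> 'v set set \<Rightarrow> bool" where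
  "simple_graph V E \<longleftrightarrow> finite V \<and>
     (\<forall>e\<in>E. \<exists>u v. u \<noteq> v \<and> u \<in> V \<and> v \<in> V \<and> e = {u, v})"

definition graph_connected :: "'v set \<Rightarrow> 'v set set \<Rightarrow> bool" where
  "graph_connected V E \<longleftrightarrow>
     (\<forall>u\<in>V. \<forall>v\<in>V. (u, v) \<in> {(x, y). {x, y} \<in> E}\<^sup>*)"

definition drawing :: "'v set \<Rightarrow> 'v set set \<Rightarrow> ('v \<Rightarrow> real^2) \<Rightarrow> ('v set \<Rightarrow> real \<Rightarrow> real^2) \<Rightarrow> bool" where
  "drawing V E p \<gamma> \<longleftrightarrow> inj_on p V \<and>
     (\<forall>e\<in>E. arc (\<gamma> e) \<and>
        (\<exists>u v. e = {u, v} \<and> pathstart (\<gamma> e) = p u \<and> pathfinish (\<gamma> e) = p v) \<and>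
        (\<forall>w\<in>V. p w \<notin> \<gamma> e ` {0<..<1}))"

definition edge_interior :: "('v set \<Rightarrow> real \<Rightarrow> real^2) \<Rightarrow> 'v set \<Rightarrow> (real^2) set" where
  "edge_interior \<gamma> e = \<gamma> e ` {0<..<1}"

definition crosses :: "('v set \<Rightarrow> real \<Rightarrow> real^2) \<Rightarrow> 'v set \<Rightarrow> 'v set \<Rightarrow> bool" where
  "crosses \<gamma> e f \<longleftrightarrow> e \<noteq> f \<and> edge_interior \<gamma> e \<inter> edge_interior \<gamma> f \<noteq> {}"

definition good_drawing :: "'v set \<Rightarrow> 'v set set \<Rightarrow> ('v \<Rightarrow> real^2) \<Rightarrow> ('v set \<Rightarrow> real \<Rightarrow> real^2) \<Rightarrow> bool" where
  "good_drawing V E p \<gamma> \<longleftrightarrow> drawing V E p \<gamma> \<and>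
     (\<forall>e\<in>E. \<forall>f\<in>E. e \<noteq> f \<longrightarrow>
        (e \<inter> f \<noteq> {} \<longrightarrow> edge_interior \<gamma> e \<inter> edge_interior \<gamma> f = {}) \<and>
        (\<forall>x y. x \<in> edge_interior \<gamma> e \<inter> edge_interior \<gamma> f \<longrightarrow>
               y \<in> edge_interior \<gamma> e \<inter> edge_interior \<gamma> f \<longrightarrow> x = y))"

definition one_planar :: "'v set set \<Rightarrow> ('v set \<Rightarrow> real \<Rightarrow> real^2) \<Rightarrow> bool" where
  "one_planar E \<gamma> \<longleftrightarrow>
     (\<forall>e\<in>E. \<forall>f\<in>E. \<forall>g\<in>E. crosses \<gamma> e f \<and> crosses \<gamma> e g \<longrightarrow> f = g)"

definition associated_edges :: "'v set set \<Rightarrow> 'v set \<Rightarrow> 'v set \<Rightarrow> 'v set set" where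
  "associated_edges E e f = {g \<in> E. g \<subseteq> e \<union> f} - {e, f}"

definition type_2A :: "'v set set \<Rightarrow> ('v set \<Rightarrow> real \<Rightarrow> real^2) \<Rightarrow> bool" where
  "type_2A E \<gamma> \<longleftrightarrow> one_planar E \<gamma> \<and>
     (\<forall>e\<in>E. \<forall>f\<in>E. crosses \<gamma> e f \<longrightarrow>
        card (associated_edges E e f) \<ge> 2 \<and>
        (card (associated_edges E e f) = 2 \<longrightarrow>
           (\<forall>g\<in>associated_edges E e f. \<forall>h\<in>associated_edges E e f. g \<noteq> h \<longrightarrow> g \<inter> h = {})))"

definition nice :: "'v set set \<Rightarrow> ('v set \<Rightarrow> real \<Rightarrow> real^2) \<Rightarrow> bool" where
  "nice E \<gamma> \<longleftrightarrow> one_planar E \<gamma> \<and>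
     (\<forall>e\<in>E. \<forall>f\<in>E. crosses \<gamma> e f \<longrightarrow>
        (\<forall>g\<in>associated_edges E e f. \<forall>h\<in>E. \<not> crosses \<gamma> g h))"

definition planar_graph :: "'v set \<Rightarrow> 'v set set \<Rightarrow> bool" where
  "planar_graph V E \<longleftrightarrow> (\<exists>(p :: 'v \<Rightarrow> real^2) \<gamma>. drawing V E p \<gamma> \<and>
     (\<forall>e\<in>E. \<forall>f\<in>E. \<not> crosses \<gamma> e f))"

end

theory Submission
  imports Defs
begin

text \<open>Removing one edge of every crossing pair leaves a subdrawing without crossings,
  so only connectivity needs an argument. Let the removed edge \<open>xy\<close> cross the kept
  edge \<open>cd\<close>. In a good drawing the two edges are disjoint, so each associated edge
  joins \<open>{x, y}\<close> to \<open>{c, d}\<close>; niceness keeps the associated edges uncrossed, hence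
  not removed. Type 2A forces them to touch both \<open>x\<close> and \<open>y\<close>, so \<open>x\<close> and \<open>y\<close>
  are joined through \<open>cd\<close> in the remaining graph.\<close>

abbreviation edge_rel :: "'v set set \<Rightarrow> ('v \<times> 'v) set" where
  "edge_rel F \<equiv> {(u, v). {u, v} \<in> F}"

lemma sym_edge_rel: "sym (edge_rel F)"
  by (auto intro: symI simp: insert_commute)

lemma simple_graph_mono: "simple_graph V E \<Longrightarrow> F \<subseteq> E \<Longrightarrow> simple_graph V F"
  by (auto simp: simple_graph_def)

lemma drawing_mono: "drawing V E p \<gamma> \<Longrightarrow> F \<subseteq> E \<Longrightarrow> drawing V F p \<gamma>"
  unfolding drawing_def by blast

lemma graph_connected_if_edges_reachable:
  assumes "graph_connected V E"
    and "\<And>x y. {x, y} \<in> E \<Longrightarrow> (x, y) \<in> (edge_rel F)\<^sup>*"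
  shows "graph_connected V F"
proof -
  have "edge_rel E \<subseteq> (edge_rel F)\<^sup>*"
    using assms(2) by auto
  then have "(edge_rel E)\<^sup>* \<subseteq> (edge_rel F)\<^sup>*"
    by (rule rtrancl_subset_rtrancl)
  then show ?thesis
    using assms(1) by (auto simp: graph_connected_def)
qed

lemma good_drawing_crossing_edges_disjoint:
  assumes "good_drawing V E p \<gamma>" "e \<in> E" "f \<in> E" "crosses \<gamma> e f"
  shows "e \<inter> f = {}"
  using assms by (auto simp: good_drawing_def crosses_def)

lemma type_2A_associated_edges:
  assumes "type_2A E \<gamma>" "e \<in> E" "f \<in> E" "crosses \<gamma> e f"
  shows "2 \<le> card (associated_edges E e f)"
    and "card (associated_edges E e f) = 2 \<Longrightarrow> disjoint (associated_edges E e f)"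
  using assms unfolding type_2A_def disjoint_def by simp_all

lemma nice_associated_edges_uncrossed:
  assumes "nice E \<gamma>" "e \<in> E" "f \<in> E" "crosses \<gamma> e f"
    and "g \<in> associated_edges E e f" "h \<in> E"
  shows "\<not> crosses \<gamma> g h"
  using assms unfolding nice_def by blast

lemma associated_edges_subset_cross_pairs:
  assumes "simple_graph V E" "{x, y} \<inter> {c, d} = {}"
  shows "associated_edges E {x, y} {c, d} \<subseteq> {{x, c}, {x, d}, {y, c}, {y, d}}"
proof
  fix g
  assume "g \<in> associated_edges E {x, y} {c, d}"
  then have g: "g \<in> E" "g \<subseteq> {x, y, c, d}" "g \<noteq> {x, y}" "g \<noteq> {c, d}"
    by (auto simp: associated_edges_def)
  then obtain u v where "u \<noteq> v" "g = {u, v}"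
    using assms(1) unfolding simple_graph_def by blast
  with g assms(2) show "g \<in> {{x, c}, {x, d}, {y, c}, {y, d}}"
    by (auto simp: doubleton_eq_iff)
qed

text \<open>Without an edge at \<open>x\<close>, the at least two edges of \<open>A\<close> would be exactly
  \<open>yc\<close> and \<open>yd\<close>, which share \<open>y\<close>.\<close>

lemma cross_pairs_cover_vertex:
  assumes "A \<subseteq> {{x, c}, {x, d}, {y, c}, {y, d}}"
    and "2 \<le> card A" "card A = 2 \<Longrightarrow> disjoint A"
  shows "\<exists>g\<in>A. x \<in> g"
proof (rule ccontr)
  assume "\<not> (\<exists>g\<in>A. x \<in> g)"
  then have sub: "A \<subseteq> {{y, c}, {y, d}}"
    using assms(1) by auto
  have "card A \<le> card {{y, c}, {y, d}}"
    using sub by (intro card_mono) auto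
  also have "\<dots> \<le> 2"
    by (rule card_insert_le_m1) auto
  finally have two: "card A = 2"
    using assms(2) by simp
  have "{y, c} \<noteq> {y, d}"
  proof
    assume "{y, c} = {y, d}"
    then have "card A \<le> card {{y, d}}"
      using sub by (intro card_mono) auto
    with two show False
      by simp
  qed
  moreover have "A = {{y, c}, {y, d}}"
    using sub two calculation by (intro card_subset_eq) auto
  ultimately show False
    using assms(3) two by (auto simp: disjoint_def)
qed

lemma cross_pairs_reach:
  assumes "{c, d} \<in> F" "A \<subseteq> F"
    and "A \<subseteq> {{x, c}, {x, d}, {y, c}, {y, d}}"
    and "2 \<le> card A" "card A = 2 \<Longrightarrow> disjoint A"
  shows "(x, c) \<in> (edge_rel F)\<^sup>*"
proof -
  obtain g where g: "g \<in> A" "x \<in> g"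
    using cross_pairs_cover_vertex[OF assms(3-5)] by blast
  then have "{x, c} \<in> F \<or> {x, d} \<in> F \<or> x = c \<or> x = d"
    using assms(2,3) by auto
  moreover have "(d, c) \<in> edge_rel F"
    using assms(1) by (simp add: insert_commute)
  ultimately show ?thesis
    by (auto intro: converse_rtrancl_into_rtrancl)
qed

lemma crossed_edge_endpoints_reach:
  assumes "simple_graph V E" "good_drawing V E p \<gamma>" "type_2A E \<gamma>"
    and "{x, y} \<in> E" "f \<in> E" "crosses \<gamma> {x, y} f"
    and "f \<in> F" "associated_edges E {x, y} f \<subseteq> F"
  shows "(x, y) \<in> (edge_rel F)\<^sup>*"
proof -
  obtain c d where f: "f = {c, d}"
    using assms(1,5) unfolding simple_graph_def by blast
  let ?A = "associated_edges E {x, y} f"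
  have "{x, y} \<inter> {c, d} = {}"
    using good_drawing_crossing_edges_disjoint[OF assms(2,4-6)] f by simp
  then have pairs: "?A \<subseteq> {{x, c}, {x, d}, {y, c}, {y, d}}"
    using associated_edges_subset_cross_pairs[OF assms(1)] f by simp
  note card = type_2A_associated_edges[OF assms(3-6)]
  have "(x, c) \<in> (edge_rel F)\<^sup>*"
    using cross_pairs_reach[OF _ assms(8) pairs card] assms(7) f by simp
  moreover have "(y, c) \<in> (edge_rel F)\<^sup>*"
    using cross_pairs_reach[OF _ assms(8) _ card, of c d y x] pairs assms(7) f
    by (auto simp: insert_commute)
  then have "(c, y) \<in> (edge_rel F)\<^sup>*"
    by (blast intro: symD sym_rtrancl sym_edge_rel)
  ultimately show ?thesis
    by (rule rtrancl_trans)
qed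

lemma endpoints_reachable_after_crossing_removal:
  assumes "simple_graph V E" "good_drawing V E p \<gamma>" "type_2A E \<gamma>" "nice E \<gamma>"
    and "\<forall>e\<in>R. \<exists>f\<in>E. crosses \<gamma> e f"
    and "\<forall>e\<in>E. \<forall>f\<in>E. crosses \<gamma> e f \<longrightarrow> (e \<in> R \<longleftrightarrow> f \<notin> R)"
    and xy: "{x, y} \<in> E"
  shows "(x, y) \<in> (edge_rel (E - R))\<^sup>*"
proof (cases "{x, y} \<in> R")
  case False
  with xy show ?thesis
    by (intro r_into_rtrancl) simp
next
  case True
  then obtain f where f: "f \<in> E" "crosses \<gamma> {x, y} f"
    using assms(5) by blast
  have "associated_edges E {x, y} f \<subseteq> E - R"
  proof
    fix g
    assume g: "g \<in> associated_edges E {x, y} f"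
    then show "g \<in> E - R"
      using nice_associated_edges_uncrossed[OF assms(4) xy f g] assms(5)
      by (auto simp: associated_edges_def)
  qed
  moreover have "f \<in> E - R"
    using assms(6) xy f True by blast
  ultimately show ?thesis
    by (intro crossed_edge_endpoints_reach[OF assms(1-3) xy f])
qed

theorem lemma8:
  fixes V :: "'v set" and E :: "'v set set" and p :: "'v \<Rightarrow> real^2"
    and \<gamma> :: "'v set \<Rightarrow> real \<Rightarrow> real^2" and R :: "'v set set"
  assumes "simple_graph V E"
    and "good_drawing V E p \<gamma>"
    and "type_2A E \<gamma>"
    and "nice E \<gamma>"
    and "graph_connected V E"
    and "R \<subseteq> E"
    and "\<forall>e\<in>R. \<exists>f\<in>E. crosses \<gamma> e f"
    and "\<forall>e\<in>E. \<forall>f\<in>E. crosses \<gamma> e f \<longrightarrow> (e \<in> R \<longleftrightarrow> f \<notin> R)"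
  shows "simple_graph V (E - R) \<and> graph_connected V (E - R) \<and> planar_graph V (E - R)"
proof (intro conjI)
  show "simple_graph V (E - R)"
    using assms(1) Diff_subset by (rule simple_graph_mono)
  have "drawing V E p \<gamma>"
    using assms(2) unfolding good_drawing_def by (rule conjunct1)
  then have "drawing V (E - R) p \<gamma>"
    using Diff_subset by (rule drawing_mono)
  then show "planar_graph V (E - R)"
    using assms(8) unfolding planar_graph_def by blast
  show "graph_connected V (E - R)"
    using assms(5)
  proof (rule graph_connected_if_edges_reachable)
    show "(x, y) \<in> (edge_rel (E - R))\<^sup>*" if "{x, y} \<in> E" for x y
      using endpoints_reachable_after_crossing_removal[OF assms(1-4,7,8) that] .
  qed
qed

end
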